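(* Let $\mathscr{I}_1\subseteq(0,1)$ and $\mathscr{I}_2\subseteq\mathbb{R}$, and let $f_\nu^\alpha:\mathbb{R}\to\mathbb{R}$ ($\nu\in\mathscr{I}_1$, $\alpha\in\mathscr{I}_2$) be even continuous functions and $\vartheta_\nu^\alpha\in[0,\infty)$ be numbers such that for some $C>0$, $\|f_\nu^\alpha\|_{L^\infty}\le C$, $\vartheta_\nu^\alpha\le C\nu^2$, and $\operatorname{Lip}(f_\nu^\alpha)\le C\nu^{-1}$ for all $\nu,\alpha$ (where $\operatorname{Lip}(f)=\sup_{x\ne y}|f(x)-f(y)|/|x-y|$). Fix $q_*>0$. (i) Define \[ G_\nu^\alpha(X):=\int_0^Xf_\nu^\alpha(s+\vartheta_\nu^\alpha\tanh(q_*s))\,ds-\int_0^{X+\vartheta_\nu^\alpha\tanh(q_*X)}f_\nu^\alpha(s)\,ds . \] Then there exist $L_\nu^{\alpha,\infty}\in\mathbb{R}$ such that \[ \sup_{\nu\in\mathscr{I}_1,\alpha\in\mathscr{I}_2}\left[\nu^{-1}\left(\sup_{X\in\mathbb{R}}e^{q_*|X|}\left|G_\nu^\alpha(X)-\nu L_\nu^{\alpha,\infty}\tanh(q_*X)\right|\right)+|L_\nu^{\alpha,\infty}|\right]<\infty . \] (ii) Define $H_\nu^\alpha(X):=f_\nu^\alpha(X+\nu+\vartheta_\nu^\alpha\tanh(q_*X+q_*\nu))-f_\nu^\alpha(X+\nu+\vartheta_\nu^\alpha\tanh(q_*X))$. Then \[ \sup_{\nu\in\mathscr{I}_1,\alpha\in\mathscr{I}_2,X\in\mathbb{R}}\nu^{-2}e^{2q_*|X|}|H_\nu^\alpha(X)|<\infty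 . \] *)

theory Defs
  imports "HOL-Analysis.Analysis"
begin

definition oint :: "real \<Rightarrow> real \<Rightarrow> (real \<Rightarrow> real) \<Rightarrow> real" where
  "oint a b g = (if a \<le> b then integral {a..b} g else - integral {b..a} g)"

definition Gfun :: "(real \<Rightarrow> real) \<Rightarrow> real \<Rightarrow> real \<Rightarrow> real \<Rightarrow> real" where
  "Gfun f th q X = oint 0 X (\<lambda>s. f (s + th * tanh (q * s)))
                  - oint 0 (X + th * tanh (q * X)) f"

definition Hfun :: "(real \<Rightarrow> real) \<Rightarrow> real \<Rightarrow> real \<Rightarrow> real \<Rightarrow> real \<Rightarrow> real" where
  "Hfun f th q \<nu> X = f (X + \<nu> + th * tanh (q * X + q * \<nu>)) - f (X + \<nu> + th * tanh (q * X))"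

end

theory Submission
  imports Defs
begin

text \<open>By the fundamental theorem of calculus,
  G'(X) = -\<theta> q (1 - tanh^2(qX)) f(X + \<theta> tanh(qX)), an even function dominated by \<theta> C times
  the derivative of tanh(qX). Hence G is odd, and for X \<le> Y its increment G(Y) - G(X) is at most
  \<theta> C (1 - tanh(qX)) \<le> 2 \<theta> C e^{-2qX}; so G has a limit \<nu> L at infinity with
  |\<nu> L| \<le> \<theta> C \<le> C^2 \<nu>^2, and G(X) - \<nu> L tanh(qX) = O(\<theta> C e^{-2q|X|}). For H, the Lipschitz bound
  reduces everything to \<theta> |tanh(qX + q\<nu>) - tanh(qX)|, which by the mean value theorem is
  O(\<theta> q \<nu> e^{-2q|X|}).\<close>

lemma oint_has_real_derivative:
  fixes h :: "real \<Rightarrow> real"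
  assumes "continuous_on UNIV h"
  shows "((\<lambda>y. oint 0 y h) has_real_derivative h x) (at x)"
proof -
  define a where "a = min 0 x - 1"
  have int: "h integrable_on {u..v}" for u v
    using assms continuous_on_subset integrable_continuous_real by blast
  have oint_eq: "oint 0 y h = integral {a..y} h - integral {a..0} h" if "a < y" for y
  proof (cases "0 \<le> y")
    case True
    have "integral {a..0} h + integral {0..y} h = integral {a..y} h"
      by (rule Henstock_Kurzweil_Integration.integral_combine) (use that True a_def int in auto)
    then show ?thesis using True by (simp add: oint_def)
  next
    case False
    have "integral {a..y} h + integral {y..0} h = integral {a..0} h"
      by (rule Henstock_Kurzweil_Integration.integral_combine) (use that False a_def int in auto)
    then show ?thesis using False by (simp add: oint_def)
  qed
  have "((\<lambda>u. integral {a..u} h) has_real_derivative h x) (at x within {a..x + 1})"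
    by (rule integral_has_real_derivative) (use assms continuous_on_subset a_def in auto)
  moreover have "x \<in> interior {a..x + 1}"
    using a_def by auto
  ultimately have "((\<lambda>u. integral {a..u} h) has_real_derivative h x) (at x)"
    by (metis at_within_interior)
  then have "((\<lambda>u. integral {a..u} h - integral {a..0} h) has_real_derivative h x) (at x)"
    using DERIV_diff[OF _ DERIV_const] by fastforce
  then show ?thesis
    by (rule has_field_derivative_transform_within_open[where S = "{a<..}"])
       (use oint_eq a_def in auto)
qed

lemma Gfun_has_real_derivative:
  fixes f :: "real \<Rightarrow> real"
  assumes cf: "continuous_on UNIV f"
  shows "(Gfun f th q has_real_derivative
           - th * q * (1 - tanh (q * X)^2) * f (X + th * tanh (q * X))) (at X)"
proof -
  have "continuous_on UNIV (\<lambda>s. s + th * tanh (q * s))"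
    by (intro continuous_intros) (simp add: cosh_real_pos[THEN less_imp_neq, symmetric])
  then have "continuous_on UNIV (\<lambda>s. f (s + th * tanh (q * s)))"
    using continuous_on_compose2[OF cf] by blast
  from oint_has_real_derivative[OF this]
  have d1: "((\<lambda>X. oint 0 X (\<lambda>s. f (s + th * tanh (q * s))))
              has_real_derivative f (X + th * tanh (q * X))) (at X)" .
  have "((\<lambda>X. X + th * tanh (q * X))
          has_real_derivative 1 + th * ((1 - tanh (q * X)^2) * q)) (at X)"
    by (auto intro!: derivative_eq_intros simp: cosh_real_pos[THEN less_imp_neq, symmetric])
  from DERIV_chain2[OF oint_has_real_derivative[OF cf] this]
  have d2: "((\<lambda>X. oint 0 (X + th * tanh (q * X)) f) has_real_derivative
              f (X + th * tanh (q * X)) * (1 + th * ((1 - tanh (q * X)^2) * q))) (at X)" .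
  show ?thesis
    using DERIV_diff[OF d1 d2] unfolding Gfun_def[abs_def] by (simp add: algebra_simps)
qed

lemma Gfun_0 [simp]: "Gfun f th q 0 = 0"
  by (simp add: Gfun_def oint_def)

lemma one_minus_tanh_le: "1 - tanh (x::real) \<le> 2 * exp (-2 * x)"
proof -
  have "1 - tanh x = 2 * exp (-2 * x) / (1 + exp (-2 * x))"
    using exp_gt_zero[of "-2 * x"] unfolding tanh_real_altdef
    by (simp add: field_simps del: mult_minus_left exp_gt_zero)
  also have "\<dots> \<le> 2 * exp (-2 * x)"
    by (simp add: divide_le_eq add_pos_pos)
  finally show ?thesis .
qed

lemma one_minus_tanh_sq_nonneg: "0 \<le> 1 - tanh (x::real)^2"
  using tanh_real_bounds[of x] by (simp add: abs_square_le_1 abs_le_iff)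

lemma one_minus_tanh_sq_le: "1 - tanh (x::real)^2 \<le> 4 * exp (-2 * \<bar>x\<bar>)"
proof -
  have "1 - tanh x^2 = (1 - tanh \<bar>x\<bar>) * (1 + tanh \<bar>x\<bar>)"
    by (simp add: power2_eq_square algebra_simps)
  also have "\<dots> \<le> (2 * exp (-2 * \<bar>x\<bar>)) * 2"
    using one_minus_tanh_le[of "\<bar>x\<bar>"] tanh_real_lt_1[of "\<bar>x\<bar>"] by (intro mult_mono) auto
  finally show ?thesis by simp
qed

lemma abs_tanh_add_diff_le:
  fixes a h :: real
  assumes "0 \<le> h"
  shows "\<bar>tanh (a + h) - tanh a\<bar> \<le> 4 * h * exp (2 * h) * exp (-2 * \<bar>a\<bar>)"
proof (cases "h = 0")
  case False
  have "(tanh has_real_derivative 1 - tanh x^2) (at x)" for x :: real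
    by (auto intro!: derivative_eq_intros simp: cosh_real_pos[THEN less_imp_neq, symmetric])
  then obtain z where z: "a < z" "z < a + h"
    and mvt: "tanh (a + h) - tanh a = h * (1 - tanh z^2)"
    using MVT2[of a "a + h" tanh "\<lambda>x. 1 - tanh x^2"] assms False by auto
  have "exp (-2 * \<bar>z\<bar>) \<le> exp (2 * h) * exp (-2 * \<bar>a\<bar>)"
    using z by (simp add: exp_add[symmetric])
  then have "1 - tanh z^2 \<le> 4 * exp (2 * h) * exp (-2 * \<bar>a\<bar>)"
    using one_minus_tanh_sq_le[of z] by linarith
  then show ?thesis
    using mvt assms one_minus_tanh_sq_nonneg[of z] mult_left_mono
    by (fastforce simp: abs_mult)
qed simp

lemma DERIV_abs_diff_le_DERIV_diff:
  fixes g h :: "real \<Rightarrow> real"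
  assumes g: "\<And>x. (g has_real_derivative g' x) (at x)"
    and h: "\<And>x. (h has_real_derivative h' x) (at x)"
    and dominated: "\<And>x. \<bar>g' x\<bar> \<le> h' x"
    and "X \<le> Y"
  shows "\<bar>g Y - g X\<bar> \<le> h Y - h X"
proof -
  have incr: "k X \<le> k Y" if k: "\<And>x. (k has_real_derivative k' x) (at x)" "\<And>x. 0 \<le> k' x"
    for k k' :: "real \<Rightarrow> real"
  proof (rule DERIV_nonneg_imp_increasing_open[OF \<open>X \<le> Y\<close>])
    show "continuous_on {X..Y} k"
      using k(1) by (meson DERIV_isCont continuous_at_imp_continuous_on)
  qed (use k in blast)
  have "h X - g X \<le> h Y - g Y"
    by (rule incr[OF DERIV_diff[OF h g]]) (simp add: abs_le_D1[OF dominated])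
  moreover have "h X + g X \<le> h Y + g Y"
  proof (rule incr[OF DERIV_add[OF h g]])
    show "0 \<le> h' x + g' x" for x
      using abs_le_D2[OF dominated[of x]] by linarith
  qed
  ultimately show ?thesis
    by linarith
qed

lemma DERIV_even_imp_odd:
  fixes g :: "real \<Rightarrow> real"
  assumes g: "\<And>x. (g has_real_derivative g' x) (at x)"
    and even: "\<And>x. g' (-x) = g' x"
    and "g 0 = 0"
  shows "g (-x) = - g x"
proof -
  have "((\<lambda>x. g x + g (-x)) has_real_derivative 0) (at y)" for y
    using DERIV_add[OF g[of y] DERIV_chain2[OF g[of "-y"] DERIV_minus[OF DERIV_ident]]] even[of y]
    by simp
  then have "g x + g (-x) = g 0 + g (-0)"
    by (intro DERIV_isconst_all allI)
  then show ?thesis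
    using \<open>g 0 = 0\<close> by simp
qed

lemma tail_bound_imp_limit:
  fixes g e :: "real \<Rightarrow> real"
  assumes tail: "\<And>X Y. X \<le> Y \<Longrightarrow> \<bar>g Y - g X\<bar> \<le> e X"
    and "(e \<longlongrightarrow> 0) at_top"
  shows "\<exists>l. \<forall>X. \<bar>l - g X\<bar> \<le> e X"
proof -
  have e_seq: "(\<lambda>n. e (real n)) \<longlonglongrightarrow> 0"
    using filterlim_compose[OF \<open>(e \<longlongrightarrow> 0) at_top\<close> filterlim_real_sequentially] .
  have "Cauchy (\<lambda>n. g (real n))"
  proof (rule CauchyI)
    fix \<epsilon> :: real assume "0 < \<epsilon>"
    then obtain M where M: "\<And>n. M \<le> n \<Longrightarrow> \<bar>e (real n)\<bar> < \<epsilon> / 2"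
      using e_seq half_gt_zero LIMSEQ_D[of _ 0] by (metis real_norm_def diff_zero)
    have "\<bar>g (real m) - g (real n)\<bar> < \<epsilon>" if "M \<le> m" "M \<le> n" for m n
      using tail[of "real M" "real m"] tail[of "real M" "real n"] M[of M] that by auto
    then show "\<exists>M. \<forall>m\<ge>M. \<forall>n\<ge>M. norm (g (real m) - g (real n)) < \<epsilon>"
      by auto
  qed
  then obtain l where l: "(\<lambda>n. g (real n)) \<longlonglongrightarrow> l"
    using Cauchy_convergent_iff convergent_def by blast
  have "\<bar>l - g X\<bar> \<le> e X" for X
  proof (rule tendsto_upperbound)
    show "(\<lambda>n. \<bar>g (real n) - g X\<bar>) \<longlonglongrightarrow> \<bar>l - g X\<bar>"
      by (intro tendsto_intros l)
    show "\<forall>\<^sub>F n in sequentially. \<bar>g (real n) - g X\<bar> \<le> e X"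
      using eventually_ge_at_top[of "nat \<lceil>X\<rceil>"]
      by eventually_elim (auto intro!: tail simp: nat_le_iff ceiling_le_iff)
  qed simp
  then show ?thesis
    by blast
qed

lemma Gfun_increment_le:
  fixes f :: "real \<Rightarrow> real"
  assumes cont: "continuous_on UNIV f" and bnd: "\<And>x. \<bar>f x\<bar> \<le> C"
    and th: "0 \<le> th" and q: "0 < q" and "X \<le> Y"
  shows "\<bar>Gfun f th q Y - Gfun f th q X\<bar> \<le> th * C * (1 - tanh (q * X))"
proof -
  have C: "0 \<le> C"
    using bnd[of 0] by linarith
  define G' where "G' X = - th * q * (1 - tanh (q * X)^2) * f (X + th * tanh (q * X))" for X
  have dG: "(Gfun f th q has_real_derivative G' X) (at X)" for X
    unfolding G'_def by (rule Gfun_has_real_derivative[OF cont])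
  have dT: "((\<lambda>X. th * C * tanh (q * X)) has_real_derivative th * C * ((1 - tanh (q * X)^2) * q)) (at X)"
    for X
    by (auto intro!: derivative_eq_intros simp: cosh_real_pos[THEN less_imp_neq, symmetric])
  have "\<bar>G' X\<bar> \<le> th * C * ((1 - tanh (q * X)^2) * q)" for X
  proof -
    have "\<bar>G' X\<bar> = th * q * (1 - tanh (q * X)^2) * \<bar>f (X + th * tanh (q * X))\<bar>"
      using th q one_minus_tanh_sq_nonneg[of "q * X"] by (simp add: G'_def abs_mult)
    also have "\<dots> \<le> th * q * (1 - tanh (q * X)^2) * C"
      using th q one_minus_tanh_sq_nonneg[of "q * X"] by (intro mult_left_mono bnd) auto
    finally show ?thesis
      by (simp add: algebra_simps)
  qed
  from DERIV_abs_diff_le_DERIV_diff[OF dG dT this \<open>X \<le> Y\<close>]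
  have "\<bar>Gfun f th q Y - Gfun f th q X\<bar> \<le> th * C * tanh (q * Y) - th * C * tanh (q * X)" .
  moreover have "th * C * tanh (q * Y) \<le> th * C"
    using mult_left_mono[OF less_imp_le[OF tanh_real_lt_1] mult_nonneg_nonneg[OF th C]] by simp
  ultimately show ?thesis
    by (simp add: algebra_simps)
qed

lemma Gfun_odd:
  fixes f :: "real \<Rightarrow> real"
  assumes cont: "continuous_on UNIV f" and even: "\<And>x. f (-x) = f x"
  shows "Gfun f th q (-X) = - Gfun f th q X"
proof (rule DERIV_even_imp_odd[OF Gfun_has_real_derivative[OF cont]])
  show "- th * q * (1 - tanh (q * - x)^2) * f (- x + th * tanh (q * - x))
      = - th * q * (1 - tanh (q * x)^2) * f (x + th * tanh (q * x))" for x
    using even[of "x + th * tanh (q * x)"] by (simp add: algebra_simps)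
qed simp

lemma tanh_scaled_tendsto_at_top:
  assumes "0 < (q::real)"
  shows "((\<lambda>X. tanh (q * X)) \<longlongrightarrow> 1) at_top"
proof -
  have "filterlim (\<lambda>X. q * X) at_top at_top"
    by (rule filterlim_tendsto_pos_mult_at_top[OF tendsto_const assms filterlim_ident])
  then show ?thesis
    using filterlim_compose[OF tanh_real_at_top] by blast
qed

lemma Gfun_tanh_asymptotics:
  fixes f :: "real \<Rightarrow> real"
  assumes cont: "continuous_on UNIV f" and even: "\<And>x. f (-x) = f x"
    and bnd: "\<And>x. \<bar>f x\<bar> \<le> C" and th: "0 \<le> th" and q: "0 < q"
  shows "\<exists>L. \<bar>L\<bar> \<le> th * C \<and>
           (\<forall>X. \<bar>Gfun f th q X - L * tanh (q * X)\<bar> \<le> 4 * th * C * exp (-2 * q * \<bar>X\<bar>))"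
proof -
  let ?G = "Gfun f th q"
  have "((\<lambda>X. th * C * (1 - tanh (q * X))) \<longlongrightarrow> th * C * (1 - 1)) at_top"
    by (intro tendsto_mult tendsto_diff tendsto_const tanh_scaled_tendsto_at_top[OF q])
  then have tail_to_0: "((\<lambda>X. th * C * (1 - tanh (q * X))) \<longlongrightarrow> 0) at_top"
    by simp
  have tail: "\<bar>?G Y - ?G X\<bar> \<le> th * C * (1 - tanh (q * X))" if "X \<le> Y" for X Y
    using Gfun_increment_le[OF cont bnd th q that] .
  obtain L where L: "\<And>X. \<bar>L - ?G X\<bar> \<le> th * C * (1 - tanh (q * X))"
    using tail_bound_imp_limit[OF tail tail_to_0] by blast
  have L_bound: "\<bar>L\<bar> \<le> th * C"
    using L[of 0] by simp
  have pos: "\<bar>?G X - L * tanh (q * X)\<bar> \<le> 4 * th * C * exp (-2 * q * X)" if "0 \<le> X" for X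
  proof -
    have "?G X - L * tanh (q * X) = (?G X - L) + L * (1 - tanh (q * X))"
      by (simp add: algebra_simps)
    then have "\<bar>?G X - L * tanh (q * X)\<bar> \<le> \<bar>?G X - L\<bar> + \<bar>L\<bar> * (1 - tanh (q * X))"
      using abs_triangle_ineq[of "?G X - L" "L * (1 - tanh (q * X))"] tanh_real_lt_1[of "q * X"]
      by (simp add: abs_mult)
    also have "\<dots> \<le> th * C * (1 - tanh (q * X)) + th * C * (1 - tanh (q * X))"
      using L[of X] L_bound tanh_real_lt_1[of "q * X"]
      by (intro add_mono mult_right_mono) (auto simp: abs_minus_commute)
    also have "\<dots> = 2 * (th * C) * (1 - tanh (q * X))"
      by simp
    also have "\<dots> \<le> 2 * (th * C) * (2 * exp (-2 * (q * X)))"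
      using th L_bound one_minus_tanh_le[of "q * X"] by (intro mult_left_mono) auto
    finally show ?thesis
      by (simp add: algebra_simps)
  qed
  have "\<bar>?G X - L * tanh (q * X)\<bar> \<le> 4 * th * C * exp (-2 * q * \<bar>X\<bar>)" for X
  proof (cases "0 \<le> X")
    case False
    then show ?thesis
      using pos[of "-X"] Gfun_odd[OF cont even, of th q X] by (simp add: abs_minus_commute)
  qed (use pos in simp)
  with L_bound show ?thesis
    by blast
qed

lemma Gfun_normalized_bound:
  fixes f :: "real \<Rightarrow> real"
  assumes cont: "continuous_on UNIV f" and even: "\<And>x. f (-x) = f x"
    and bnd: "\<And>x. \<bar>f x\<bar> \<le> C" and q: "0 < q"
    and nu: "0 < \<nu>" "\<nu> \<le> 1" and th: "0 \<le> th" "th \<le> C * \<nu>^2"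
  shows "\<exists>L. \<forall>X. (1 / \<nu>) * (exp (q * \<bar>X\<bar>) * \<bar>Gfun f th q X - \<nu> * L * tanh (q * X)\<bar>) + \<bar>L\<bar>
                \<le> 5 * C^2"
proof -
  have C: "0 \<le> C"
    using bnd[of 0] by linarith
  obtain L where L_bound: "\<bar>L\<bar> \<le> th * C"
    and L: "\<And>X. \<bar>Gfun f th q X - L * tanh (q * X)\<bar> \<le> 4 * th * C * exp (-2 * q * \<bar>X\<bar>)"
    using Gfun_tanh_asymptotics[OF cont even bnd th(1) q] by blast
  have "(1 / \<nu>) * (exp (q * \<bar>X\<bar>) * \<bar>Gfun f th q X - \<nu> * (L / \<nu>) * tanh (q * X)\<bar>) + \<bar>L / \<nu>\<bar>
        \<le> 5 * C^2" for X
  proof -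
    have "exp (q * \<bar>X\<bar>) * \<bar>Gfun f th q X - L * tanh (q * X)\<bar>
          \<le> exp (q * \<bar>X\<bar>) * (4 * th * C * exp (-2 * q * \<bar>X\<bar>))"
      using L by (intro mult_left_mono) auto
    also have "\<dots> = 4 * th * C * exp (- q * \<bar>X\<bar>)"
      by (simp add: exp_add[symmetric])
    also have "\<dots> \<le> 4 * th * C"
      using th C q by (intro mult_right_le_one_le) auto
    finally have "(1 / \<nu>) * (exp (q * \<bar>X\<bar>) * \<bar>Gfun f th q X - L * tanh (q * X)\<bar>) + \<bar>L\<bar> / \<nu>
                  \<le> (1 / \<nu>) * (4 * th * C) + th * C / \<nu>"
      using L_bound nu by (intro add_mono mult_left_mono divide_right_mono) auto
    also have "\<dots> = 5 * th * C / \<nu>"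
      by (simp add: field_simps)
    also have "\<dots> \<le> 5 * (C * \<nu>^2) * C / \<nu>"
      using th C nu by (intro divide_right_mono mult_right_mono) auto
    also have "\<dots> = 5 * C^2 * \<nu>"
      using nu by (simp add: field_simps power2_eq_square)
    also have "\<dots> \<le> 5 * C^2"
      using nu by (simp add: mult_left_le)
    finally show ?thesis
      using nu by simp
  qed
  then show ?thesis
    by blast
qed

lemma abs_Hfun_le:
  fixes f :: "real \<Rightarrow> real"
  assumes lip: "K-lipschitz_on UNIV f" and th: "0 \<le> th"
  shows "\<bar>Hfun f th q \<nu> X\<bar> \<le> K * (th * \<bar>tanh (q * X + q * \<nu>) - tanh (q * X)\<bar>)"
proof -
  have "\<bar>Hfun f th q \<nu> X\<bar>
      \<le> K * dist (X + \<nu> + th * tanh (q * X + q * \<nu>)) (X + \<nu> + th * tanh (q * X))"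
    using lipschitz_onD[OF lip, of "X + \<nu> + th * tanh (q * X + q * \<nu>)" "X + \<nu> + th * tanh (q * X)"]
    unfolding Hfun_def by (simp add: dist_real_def)
  also have "dist (X + \<nu> + th * tanh (q * X + q * \<nu>)) (X + \<nu> + th * tanh (q * X))
      = th * \<bar>tanh (q * X + q * \<nu>) - tanh (q * X)\<bar>"
    using th by (simp add: dist_real_def abs_mult right_diff_distrib[symmetric])
  finally show ?thesis .
qed

lemma Hfun_normalized_bound:
  fixes f :: "real \<Rightarrow> real"
  assumes lip: "(C / \<nu>)-lipschitz_on UNIV f" and C: "0 \<le> C" and q: "0 < q"
    and nu: "0 < \<nu>" "\<nu> \<le> 1" and th: "0 \<le> th" "th \<le> C * \<nu>^2"
  shows "(1 / \<nu>^2) * exp (2 * q * \<bar>X\<bar>) * \<bar>Hfun f th q \<nu> X\<bar> \<le> 4 * C^2 * q * exp (2 * q)"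
proof -
  have "\<bar>tanh (q * X + q * \<nu>) - tanh (q * X)\<bar> \<le> 4 * (q * \<nu>) * exp (2 * (q * \<nu>)) * exp (-2 * q * \<bar>X\<bar>)"
    using abs_tanh_add_diff_le[of "q * \<nu>" "q * X"] q nu by (simp add: abs_mult mult.assoc)
  also have "\<dots> \<le> 4 * (q * \<nu>) * exp (2 * q) * exp (-2 * q * \<bar>X\<bar>)"
    using q nu by (intro mult_right_mono mult_left_mono) (auto simp: mult_left_le)
  finally have tanh_diff: "\<bar>tanh (q * X + q * \<nu>) - tanh (q * X)\<bar>
                             \<le> 4 * (q * \<nu>) * exp (2 * q) * exp (-2 * q * \<bar>X\<bar>)" .
  have "\<bar>Hfun f th q \<nu> X\<bar> \<le> (C / \<nu>) * (th * \<bar>tanh (q * X + q * \<nu>) - tanh (q * X)\<bar>)"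
    by (rule abs_Hfun_le[OF lip th(1)])
  also have "\<dots> \<le> (C / \<nu>) * ((C * \<nu>^2) * (4 * (q * \<nu>) * exp (2 * q) * exp (-2 * q * \<bar>X\<bar>)))"
    using C nu th tanh_diff by (intro mult_left_mono mult_mono) auto
  also have "\<dots> = \<nu>^2 * exp (-2 * q * \<bar>X\<bar>) * (4 * C^2 * q * exp (2 * q))"
    using nu by (simp add: field_simps power2_eq_square)
  finally have "(1 / \<nu>^2) * exp (2 * q * \<bar>X\<bar>) * \<bar>Hfun f th q \<nu> X\<bar>
      \<le> (1 / \<nu>^2) * exp (2 * q * \<bar>X\<bar>) * (\<nu>^2 * exp (-2 * q * \<bar>X\<bar>) * (4 * C^2 * q * exp (2 * q)))"
    by (intro mult_left_mono) auto
  also have "\<dots> = 4 * C^2 * q * exp (2 * q)"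
    using nu by (simp add: field_simps exp_add[symmetric])
  finally show ?thesis .
qed

theorem lemmaB4:
  fixes I1 I2 :: "real set"
    and f :: "real \<Rightarrow> real \<Rightarrow> real \<Rightarrow> real"
    and \<theta> :: "real \<Rightarrow> real \<Rightarrow> real"
    and C q :: real
  assumes I1: "I1 \<subseteq> {0<..<1}"
    and C_pos: "C > 0"
    and q_pos: "q > 0"
    and even: "\<And>\<nu> \<alpha> x. \<nu> \<in> I1 \<Longrightarrow> \<alpha> \<in> I2 \<Longrightarrow> f \<nu> \<alpha> (- x) = f \<nu> \<alpha> x"
    and cont: "\<And>\<nu> \<alpha>. \<nu> \<in> I1 \<Longrightarrow> \<alpha> \<in> I2 \<Longrightarrow> continuous_on UNIV (f \<nu> \<alpha>)"
    and bnd: "\<And>\<nu> \<alpha> x. \<nu> \<in> I1 \<Longrightarrow> \<alpha> \<in> I2 \<Longrightarrow> \<bar>f \<nu> \<alpha> x\<bar> \<le> C"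
    and th_nonneg: "\<And>\<nu> \<alpha>. \<nu> \<in> I1 \<Longrightarrow> \<alpha> \<in> I2 \<Longrightarrow> 0 \<le> \<theta> \<nu> \<alpha>"
    and th_bnd: "\<And>\<nu> \<alpha>. \<nu> \<in> I1 \<Longrightarrow> \<alpha> \<in> I2 \<Longrightarrow> \<theta> \<nu> \<alpha> \<le> C * \<nu>\<^sup>2"
    and lip: "\<And>\<nu> \<alpha>. \<nu> \<in> I1 \<Longrightarrow> \<alpha> \<in> I2 \<Longrightarrow> (C / \<nu>)-lipschitz_on UNIV (f \<nu> \<alpha>)"
  shows "(\<exists>L :: real \<Rightarrow> real \<Rightarrow> real. \<exists>M. \<forall>\<nu>\<in>I1. \<forall>\<alpha>\<in>I2. \<forall>X.
            (1 / \<nu>) * (exp (q * \<bar>X\<bar>) *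
               \<bar>Gfun (f \<nu> \<alpha>) (\<theta> \<nu> \<alpha>) q X - \<nu> * L \<nu> \<alpha> * tanh (q * X)\<bar>)
            + \<bar>L \<nu> \<alpha>\<bar> \<le> M)
       \<and> (\<exists>M. \<forall>\<nu>\<in>I1. \<forall>\<alpha>\<in>I2. \<forall>X.
            (1 / \<nu>\<^sup>2) * exp (2 * q * \<bar>X\<bar>) * \<bar>Hfun (f \<nu> \<alpha>) (\<theta> \<nu> \<alpha>) q \<nu> X\<bar> \<le> M)"
proof -
  have G: "\<forall>\<nu>\<in>I1. \<forall>\<alpha>\<in>I2. \<exists>l. \<forall>X.
      (1 / \<nu>) * (exp (q * \<bar>X\<bar>) * \<bar>Gfun (f \<nu> \<alpha>) (\<theta> \<nu> \<alpha>) q X - \<nu> * l * tanh (q * X)\<bar>)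
      + \<bar>l\<bar> \<le> 5 * C^2"
    using I1 by (intro ballI Gfun_normalized_bound cont even bnd q_pos th_nonneg th_bnd) auto
  have H: "\<forall>\<nu>\<in>I1. \<forall>\<alpha>\<in>I2. \<forall>X.
      (1 / \<nu>\<^sup>2) * exp (2 * q * \<bar>X\<bar>) * \<bar>Hfun (f \<nu> \<alpha>) (\<theta> \<nu> \<alpha>) q \<nu> X\<bar>
      \<le> 4 * C^2 * q * exp (2 * q)"
    using I1 C_pos by (intro ballI allI Hfun_normalized_bound lip q_pos th_nonneg th_bnd) auto
  from G obtain L where "\<forall>\<nu>\<in>I1. \<forall>\<alpha>\<in>I2. \<forall>X.
      (1 / \<nu>) * (exp (q * \<bar>X\<bar>) * \<bar>Gfun (f \<nu> \<alpha>) (\<theta> \<nu> \<alpha>) q X - \<nu> * L \<nu> \<alpha> * tanh (q * X)\<bar>)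
      + \<bar>L \<nu> \<alpha>\<bar> \<le> 5 * C^2"
    by metis
  with H show ?thesis
    by blast
qed

end
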